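(* Let $\lambda\neq 0$ with $\operatorname{Re}\lambda\ge 0$ be an eigenvalue of the problem \[ \lambda p = p_{\xi\xi}+c\,p_\xi+F_w(\widehat w)\,\widehat y\,(hp-(1-h)q)+F(\widehat w)\,q,\qquad \lambda q = \varepsilon q_{\xi\xi}+c\,q_\xi-F_w(\widehat w)\,\widehat y\,(hp-(1-h)q)-F(\widehat w)\,q, \] i.e. there is a nonzero $(p,q)\in H^2(\mathbb{R})\times H^2(\mathbb{R})$ solving it. Then \[ \operatorname{Re}\lambda\le\Big(3-\frac{3h}{2}\Big)\sup_{\xi\in\mathbb{R}}\big(F_w(\widehat w(\xi))\,\widehat y(\xi)\big)+e^{Z(1-h)}, \] and \[ |\lambda|\le\frac{c^2}{4}\max\Big\{1,\frac{1}{\varepsilon}\Big\}+(3-h)\sup_{\xi\in\mathbb{R}}\big(F_w(\widehat w(\xi))\,\widehat y(\xi)\big)+e^{Z(1-h)} . \]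
   Context: Parameters: $\varepsilon\in(0,1)$, $h\in(0,1)$, Zeldovich number $Z>0$, $\sigma\in(0,1)$, ignition temperature $T_{ign}>0$ and $\delta>0$ with $T_{ign}+2\delta<1$. The reaction rate $F=F_\delta$ is \[ F(v)=\begin{cases}\exp\!\Big(Z\frac{v-h}{\sigma+(1-\sigma)v}\Big), & v\ge T_{ign}+2\delta,\\[2pt] \exp\!\Big(Z\frac{v-h}{\sigma+(1-\sigma)v}\Big)H^\delta(v-T_{ign}-\delta), & T_{ign}\le v<T_{ign}+2\delta,\\[2pt] 0, & v<T_{ign},\end{cases} \] where $H^\delta(x)=1/(1+e^{4x\delta/(\delta^2-x^2)})$ for $|x|<\delta$, $H^\delta(x)=1$ for $x\ge\delta$, $H^\delta(x)=0$ for $x\le-\delta$. $F$ is nonnegative and nondecreasing (so $F(1)=e^{Z(1-h)}$ is its maximum on $[0,1]$), and $F_w$ denotes its derivative (so $F_w\ge 0$). $c>0$ and $(\widehat u,\widehat y)$ is a traveling front, i.e. a solution of $u''+cu'+yF(hu+(1-h)(1-y))=0$, $\varepsilon y''+cy'-yF(hu+(1-h)(1-y))=0$ with $(u,y)\to(1,0)$ as $\xi\to-\infty$ and $(u,y)\to(0,1)$ as $\xi\to+\infty$; it is assumed that $0\le\widehat y\le 1$ and $0\le \widehat w\le 1$, where $\widehat w=h\widehat u+(1-h)(1-\widehat y)$. *)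

theory Defs
  imports "HOL-Analysis.Analysis"
begin

definition Hdelta :: "real \<Rightarrow> real \<Rightarrow> real" where
  "Hdelta \<delta> x =
     (if x \<ge> \<delta> then 1
      else if x \<le> - \<delta> then 0
      else 1 / (1 + exp (- (4 * x * \<delta> / (\<delta>\<^sup>2 - x\<^sup>2)))))"

definition Frate :: "real \<Rightarrow> real \<Rightarrow> real \<Rightarrow> real \<Rightarrow> real \<Rightarrow> real \<Rightarrow> real" where
  "Frate Z h \<sigma> Tign \<delta> v =
     (if v \<ge> Tign + 2 * \<delta> then exp (Z * (v - h) / (\<sigma> + (1 - \<sigma>) * v))
      else if v \<ge> Tign then exp (Z * (v - h) / (\<sigma> + (1 - \<sigma>) * v)) * Hdelta \<delta> (v - Tign - \<delta>)
      else 0)"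

definition Fw :: "real \<Rightarrow> real \<Rightarrow> real \<Rightarrow> real \<Rightarrow> real \<Rightarrow> real \<Rightarrow> real" where
  "Fw Z h \<sigma> Tign \<delta> v = deriv (Frate Z h \<sigma> Tign \<delta>) v"

definition H2 :: "(real \<Rightarrow> complex) \<Rightarrow> (real \<Rightarrow> complex) \<Rightarrow> (real \<Rightarrow> complex) \<Rightarrow> bool" where
  "H2 p p' p'' \<longleftrightarrow>
     (\<forall>x. (p has_vector_derivative p' x) (at x)) \<and>
     (\<forall>x. (p' has_vector_derivative p'' x) (at x)) \<and>
     p \<in> borel_measurable lborel \<and> p' \<in> borel_measurable lborel \<and> p'' \<in> borel_measurable lborel \<and>
     integrable lborel (\<lambda>x. (cmod (p x))\<^sup>2) \<and>
     integrable lborel (\<lambda>x. (cmod (p' x))\<^sup>2) \<and>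
     integrable lborel (\<lambda>x. (cmod (p'' x))\<^sup>2)"

end

theory Submission
  imports Defs "HOL-Real_Asymp.Real_Asymp"
begin

(* Multiply the p-equation by conj p and the q-equation by conj q, subtract and integrate over R.
   With r = F_w(w) y (h p - (1 - h) q) + F(w) q this gives
     lambda (|p|^2 + |q|^2) = <r, p - q> - |p'|^2 - eps |q'|^2 + c (<p', p> + <q', q>),
   where <p', p> and <q', q> are purely imaginary by integration by parts.  Pointwise estimates of
   r (conj p - conj q) bound Re lambda.  In the imaginary part the convection terms are absorbed by
   the diffusion terms through c |p'| |p| <= |p'|^2 + c^2/4 |p|^2 (and its eps-weighted analogue
   for q), which bounds Re lambda + |Im lambda| >= |lambda|.  The suprema are finite because
   F <= e^(Z(1-h)) on [0,1] and F_w is continuous there, the cutoff H^delta being C^1. *)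

section \<open>The smooth cutoff\<close>

definition smooth_step :: "real \<Rightarrow> real" where
  "smooth_step z =
     (if 1 \<le> z then 1 else if z \<le> -1 then 0 else 1 / (1 + exp (- (4 * z / (1 - z\<^sup>2)))))"

definition smooth_step_deriv :: "real \<Rightarrow> real" where
  "smooth_step_deriv z =
     (if \<bar>z\<bar> < 1
      then exp (- (4 * z / (1 - z\<^sup>2))) * (4 * (1 + z\<^sup>2) / (1 - z\<^sup>2)\<^sup>2)
           / (1 + exp (- (4 * z / (1 - z\<^sup>2))))\<^sup>2
      else 0)"

lemma Hdelta_eq_smooth_step: "0 < \<delta> \<Longrightarrow> Hdelta \<delta> x = smooth_step (x / \<delta>)"
  unfolding Hdelta_def smooth_step_def by (auto simp: field_simps power2_eq_square)

lemma smooth_step_bounds: "0 \<le> smooth_step z" "smooth_step z \<le> 1"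
  unfolding smooth_step_def by (auto simp: add_pos_pos)

lemma smooth_step_deriv_nonneg: "0 \<le> smooth_step_deriv z"
  unfolding smooth_step_deriv_def by auto

lemma has_real_derivative_split:
  assumes "((\<lambda>y. (f y - f x) / (y - x)) \<longlongrightarrow> D) (at_left x)"
    and "((\<lambda>y. (f y - f x) / (y - x)) \<longlongrightarrow> D) (at_right x)"
  shows "(f has_real_derivative D) (at x)"
  using assms by (simp add: has_field_derivative_iff filterlim_at_split)

lemma has_real_derivative_smooth_step_inside:
  assumes "\<bar>z\<bar> < 1"
  shows "((\<lambda>z. 1 / (1 + exp (- (4 * z / (1 - z\<^sup>2))))) has_real_derivative smooth_step_deriv z) (at z)"
proof -
  have "z\<^sup>2 < 1"
    using assms by (simp add: abs_square_less_1)
  then have "1 - z\<^sup>2 \<noteq> 0"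
    by simp
  moreover have "1 + exp t \<noteq> 0" for t :: real
    using exp_gt_zero[of t] by linarith
  ultimately show ?thesis
    using assms unfolding smooth_step_deriv_def
    by (auto intro!: derivative_eq_intros simp: power2_eq_square field_simps)
qed

lemma has_real_derivative_smooth_step_at_1: "(smooth_step has_real_derivative 0) (at 1)"
proof (rule has_real_derivative_split)
  show "((\<lambda>y. (smooth_step y - smooth_step 1) / (y - 1)) \<longlongrightarrow> 0) (at_left 1)"
  proof (rule Lim_transform_eventually)
    show "((\<lambda>y::real. (1 / (1 + exp (- (4 * y / (1 - y\<^sup>2)))) - 1) / (y - 1)) \<longlongrightarrow> 0) (at_left 1)"
      by real_asymp
    show "\<forall>\<^sub>F y in at_left 1. (1 / (1 + exp (- (4 * y / (1 - y\<^sup>2)))) - 1) / (y - 1)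
            = (smooth_step y - smooth_step 1) / (y - 1)"
      unfolding eventually_at_left_field by (rule exI[of _ "-1"]) (simp add: smooth_step_def)
  qed
  show "((\<lambda>y. (smooth_step y - smooth_step 1) / (y - 1)) \<longlongrightarrow> 0) (at_right 1)"
  proof (rule Lim_transform_eventually[OF tendsto_const])
    show "\<forall>\<^sub>F y in at_right 1. 0 = (smooth_step y - smooth_step 1) / (y - 1)"
      unfolding eventually_at_right_field by (rule exI[of _ 2]) (simp add: smooth_step_def)
  qed
qed

lemma has_real_derivative_smooth_step_at_minus_1: "(smooth_step has_real_derivative 0) (at (-1))"
proof (rule has_real_derivative_split)
  show "((\<lambda>y. (smooth_step y - smooth_step (-1)) / (y - -1)) \<longlongrightarrow> 0) (at_right (-1))"
  proof (rule Lim_transform_eventually)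
    show "((\<lambda>y::real. (1 / (1 + exp (- (4 * y / (1 - y\<^sup>2))))) / (y - -1)) \<longlongrightarrow> 0) (at_right (-1))"
      by real_asymp
    show "\<forall>\<^sub>F y in at_right (-1). (1 / (1 + exp (- (4 * y / (1 - y\<^sup>2))))) / (y - -1)
            = (smooth_step y - smooth_step (-1)) / (y - -1)"
      unfolding eventually_at_right_field by (rule exI[of _ 1]) (simp add: smooth_step_def)
  qed
  show "((\<lambda>y. (smooth_step y - smooth_step (-1)) / (y - -1)) \<longlongrightarrow> 0) (at_left (-1))"
  proof (rule Lim_transform_eventually[OF tendsto_const])
    show "\<forall>\<^sub>F y in at_left (-1). 0 = (smooth_step y - smooth_step (-1)) / (y - -1)"
      unfolding eventually_at_left_field by (rule exI[of _ "-2"]) (simp add: smooth_step_def)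
  qed
qed

lemma has_real_derivative_smooth_step: "(smooth_step has_real_derivative smooth_step_deriv z) (at z)"
proof -
  consider "1 < z" | "z < -1" | "\<bar>z\<bar> < 1" | "z = 1" | "z = -1"
    by linarith
  then show ?thesis
  proof cases
    case 1
    have "(smooth_step has_real_derivative 0) (at z)"
      by (rule has_field_derivative_transform_within_open[OF DERIV_const, where S = "{1<..}"])
        (use 1 in \<open>auto simp: smooth_step_def\<close>)
    with 1 show ?thesis
      by (simp add: smooth_step_deriv_def)
  next
    case 2
    have "(smooth_step has_real_derivative 0) (at z)"
      by (rule has_field_derivative_transform_within_open[OF DERIV_const, where S = "{..<-1}"])
        (use 2 in \<open>auto simp: smooth_step_def\<close>)
    with 2 show ?thesis
      by (simp add: smooth_step_deriv_def)
  next
    case 3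
    then show ?thesis
      by (intro has_field_derivative_transform_within_open[OF has_real_derivative_smooth_step_inside,
            where S = "{-1<..<1}"]) (auto simp: smooth_step_def)
  qed (use has_real_derivative_smooth_step_at_1 has_real_derivative_smooth_step_at_minus_1
      in \<open>simp_all add: smooth_step_deriv_def\<close>)
qed

lemma isCont_smooth_step_deriv_at_1: "isCont smooth_step_deriv 1"
proof -
  have "(smooth_step_deriv \<longlongrightarrow> 0) (at_left 1)"
  proof (rule Lim_transform_eventually)
    show "((\<lambda>z::real. exp (- (4 * z / (1 - z\<^sup>2))) * (4 * (1 + z\<^sup>2) / (1 - z\<^sup>2)\<^sup>2)
        / (1 + exp (- (4 * z / (1 - z\<^sup>2))))\<^sup>2) \<longlongrightarrow> 0) (at_left 1)"
      by real_asymp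
    show "\<forall>\<^sub>F z in at_left 1. exp (- (4 * z / (1 - z\<^sup>2))) * (4 * (1 + z\<^sup>2) / (1 - z\<^sup>2)\<^sup>2)
        / (1 + exp (- (4 * z / (1 - z\<^sup>2))))\<^sup>2 = smooth_step_deriv z"
      unfolding eventually_at_left_field
      by (rule exI[of _ "-1"]) (auto simp: smooth_step_deriv_def abs_less_iff)
  qed
  moreover have "(smooth_step_deriv \<longlongrightarrow> 0) (at_right 1)"
  proof (rule Lim_transform_eventually[OF tendsto_const])
    show "\<forall>\<^sub>F z in at_right 1. 0 = smooth_step_deriv z"
      unfolding eventually_at_right_field by (rule exI[of _ 2]) (simp add: smooth_step_deriv_def)
  qed
  ultimately show ?thesis
    by (simp add: isCont_def filterlim_at_split smooth_step_deriv_def)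
qed

lemma isCont_smooth_step_deriv_at_minus_1: "isCont smooth_step_deriv (-1)"
proof -
  have "(smooth_step_deriv \<longlongrightarrow> 0) (at_right (-1))"
  proof (rule Lim_transform_eventually)
    show "((\<lambda>z::real. exp (- (4 * z / (1 - z\<^sup>2))) * (4 * (1 + z\<^sup>2) / (1 - z\<^sup>2)\<^sup>2)
        / (1 + exp (- (4 * z / (1 - z\<^sup>2))))\<^sup>2) \<longlongrightarrow> 0) (at_right (-1))"
      by real_asymp
    show "\<forall>\<^sub>F z in at_right (-1). exp (- (4 * z / (1 - z\<^sup>2))) * (4 * (1 + z\<^sup>2) / (1 - z\<^sup>2)\<^sup>2)
        / (1 + exp (- (4 * z / (1 - z\<^sup>2))))\<^sup>2 = smooth_step_deriv z"
      unfolding eventually_at_right_field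
      by (rule exI[of _ 1]) (auto simp: smooth_step_deriv_def abs_less_iff)
  qed
  moreover have "(smooth_step_deriv \<longlongrightarrow> 0) (at_left (-1))"
  proof (rule Lim_transform_eventually[OF tendsto_const])
    show "\<forall>\<^sub>F z in at_left (-1). 0 = smooth_step_deriv z"
      unfolding eventually_at_left_field by (rule exI[of _ "-2"]) (simp add: smooth_step_deriv_def)
  qed
  ultimately show ?thesis
    by (simp add: isCont_def filterlim_at_split smooth_step_deriv_def)
qed

lemma isCont_smooth_step_deriv: "isCont smooth_step_deriv z"
proof -
  consider "1 < \<bar>z\<bar>" | "\<bar>z\<bar> < 1" | "z = 1" | "z = -1"
    by linarith
  then show ?thesis
  proof cases
    case 1
    have "open {y :: real. 1 < \<bar>y\<bar>}"
      by (intro open_Collect_less continuous_intros)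
    then have "\<forall>\<^sub>F y in nhds z. smooth_step_deriv y = 0"
      using 1 by (auto elim!: eventually_mono[OF eventually_nhds_in_open] simp: smooth_step_deriv_def)
    then show ?thesis
      by (simp add: isCont_cong)
  next
    case 2
    define g where "g z = exp (- (4 * z / (1 - z\<^sup>2))) * (4 * (1 + z\<^sup>2) / (1 - z\<^sup>2)\<^sup>2)
      / (1 + exp (- (4 * z / (1 - z\<^sup>2))))\<^sup>2" for z :: real
    have "\<forall>\<^sub>F y in nhds z. y \<in> {-1<..<1}"
      using 2 by (intro eventually_nhds_in_open) auto
    then have "\<forall>\<^sub>F y in nhds z. smooth_step_deriv y = g y"
      by eventually_elim (auto simp: smooth_step_deriv_def g_def abs_less_iff)
    moreover have "isCont g z"
    proof -
      have "z\<^sup>2 < 1"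
        using 2 by (simp add: abs_square_less_1)
      moreover have "1 + exp t \<noteq> 0" for t :: real
        using exp_gt_zero[of t] by linarith
      ultimately show ?thesis
        unfolding g_def by (intro continuous_intros) auto
    qed
    ultimately show ?thesis
      by (simp add: isCont_cong)
  qed (use isCont_smooth_step_deriv_at_1 isCont_smooth_step_deriv_at_minus_1 in simp_all)
qed

section \<open>The reaction rate and its derivative\<close>

lemma Frate_eq_smooth_step:
  assumes "0 < \<delta>"
  shows "Frate Z h \<sigma> T \<delta> v = exp (Z * (v - h) / (\<sigma> + (1 - \<sigma>) * v)) * smooth_step ((v - T - \<delta>) / \<delta>)"
  using assms by (auto simp: Frate_def Hdelta_eq_smooth_step smooth_step_def field_simps)

definition Frate_deriv :: "real \<Rightarrow> real \<Rightarrow> real \<Rightarrow> real \<Rightarrow> real \<Rightarrow> real \<Rightarrow> real" where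
  "Frate_deriv Z h \<sigma> T \<delta> v = exp (Z * (v - h) / (\<sigma> + (1 - \<sigma>) * v)) *
     (Z * (\<sigma> + (1 - \<sigma>) * h) / (\<sigma> + (1 - \<sigma>) * v)\<^sup>2 * smooth_step ((v - T - \<delta>) / \<delta>)
      + smooth_step_deriv ((v - T - \<delta>) / \<delta>) / \<delta>)"

lemma has_real_derivative_Frate:
  assumes "0 < \<delta>" "\<sigma> + (1 - \<sigma>) * v \<noteq> 0"
  shows "(Frate Z h \<sigma> T \<delta> has_real_derivative Frate_deriv Z h \<sigma> T \<delta> v) (at v)"
proof -
  have exponent: "((\<lambda>v. Z * (v - h) / (\<sigma> + (1 - \<sigma>) * v)) has_real_derivative
      Z * (\<sigma> + (1 - \<sigma>) * h) / (\<sigma> + (1 - \<sigma>) * v)\<^sup>2) (at v)"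
  proof -
    have "((\<lambda>v. Z * (v - h) / (\<sigma> + (1 - \<sigma>) * v)) has_real_derivative
        (Z * (\<sigma> + (1 - \<sigma>) * v) - Z * (v - h) * (1 - \<sigma>)) / (\<sigma> + (1 - \<sigma>) * v)\<^sup>2) (at v)"
      using assms(2) by (auto intro!: derivative_eq_intros simp: power2_eq_square)
    moreover have "Z * (\<sigma> + (1 - \<sigma>) * v) - Z * (v - h) * (1 - \<sigma>) = Z * (\<sigma> + (1 - \<sigma>) * h)"
      by (simp add: algebra_simps)
    ultimately show ?thesis
      by simp
  qed
  have cutoff: "((\<lambda>v. smooth_step ((v - T - \<delta>) / \<delta>)) has_real_derivative
      smooth_step_deriv ((v - T - \<delta>) / \<delta>) * (1 / \<delta>)) (at v)"
    by (rule DERIV_chain2[OF has_real_derivative_smooth_step]) (use assms(1) in \<open>auto intro!: derivative_eq_intros\<close>)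
  have "Frate Z h \<sigma> T \<delta> =
      (\<lambda>v. exp (Z * (v - h) / (\<sigma> + (1 - \<sigma>) * v)) * smooth_step ((v - T - \<delta>) / \<delta>))"
    using Frate_eq_smooth_step[OF assms(1)] by blast
  then show ?thesis
    using DERIV_mult[OF DERIV_fun_exp[OF exponent] cutoff]
    by (simp add: Frate_deriv_def algebra_simps)
qed

lemma Fw_eq_Frate_deriv:
  assumes "0 < \<delta>" "0 < \<sigma>" "\<sigma> \<le> 1" "0 \<le> v"
  shows "Fw Z h \<sigma> T \<delta> v = Frate_deriv Z h \<sigma> T \<delta> v"
proof -
  have "0 < \<sigma> + (1 - \<sigma>) * v"
    using assms by (simp add: add_pos_nonneg)
  then show ?thesis
    unfolding Fw_def using DERIV_imp_deriv[OF has_real_derivative_Frate[OF assms(1)]] by simp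
qed

lemma Fw_nonneg:
  assumes "0 < \<delta>" "0 < \<sigma>" "\<sigma> \<le> 1" "0 \<le> v" "0 \<le> Z" "0 \<le> h"
  shows "0 \<le> Fw Z h \<sigma> T \<delta> v"
proof -
  have "0 \<le> \<sigma> + (1 - \<sigma>) * h"
    using assms by simp
  then show ?thesis
    unfolding Fw_eq_Frate_deriv[OF assms(1-4)] Frate_deriv_def
    by (intro mult_nonneg_nonneg add_nonneg_nonneg divide_nonneg_nonneg
        smooth_step_bounds smooth_step_deriv_nonneg) (use assms in auto)
qed

lemma bdd_above_Fw:
  assumes "0 < \<delta>" "0 < \<sigma>" "\<sigma> \<le> 1"
  shows "bdd_above (Fw Z h \<sigma> T \<delta> ` {0..1})"
proof -
  have nonzero: "\<sigma> + (1 - \<sigma>) * v \<noteq> 0" if "v \<in> {0..1}" for v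
    using assms that add_pos_nonneg[of \<sigma> "(1 - \<sigma>) * v"] by auto
  have step: "continuous_on UNIV smooth_step"
    by (intro continuous_at_imp_continuous_on ballI DERIV_isCont[OF has_real_derivative_smooth_step])
  have step_deriv: "continuous_on UNIV smooth_step_deriv"
    by (intro continuous_at_imp_continuous_on ballI isCont_smooth_step_deriv)
  have "continuous_on {0..1} (Frate_deriv Z h \<sigma> T \<delta>)"
    unfolding Frate_deriv_def[abs_def] using nonzero assms(1)
    by (intro continuous_intros continuous_on_compose2[OF step] continuous_on_compose2[OF step_deriv])
      auto
  then have "bounded (Frate_deriv Z h \<sigma> T \<delta> ` {0..1})"
    by (intro compact_imp_bounded compact_continuous_image) auto
  moreover have "Fw Z h \<sigma> T \<delta> ` {0..1} = Frate_deriv Z h \<sigma> T \<delta> ` {0..1}"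
    using assms by (intro image_cong Fw_eq_Frate_deriv) auto
  ultimately show ?thesis
    by (simp add: bounded_imp_bdd_above)
qed

lemma Frate_bounds:
  assumes "0 < \<delta>" "0 < \<sigma>" "\<sigma> \<le> 1" "0 \<le> v" "v \<le> 1" "0 \<le> Z" "0 \<le> h"
  shows "0 \<le> Frate Z h \<sigma> T \<delta> v" "Frate Z h \<sigma> T \<delta> v \<le> exp (Z * (1 - h))"
proof -
  have positive: "0 < \<sigma> + (1 - \<sigma>) * v"
    using assms by (simp add: add_pos_nonneg)
  have "0 \<le> (1 - v) * (\<sigma> + (1 - \<sigma>) * h)"
    using assms by simp
  then have "v - h \<le> (1 - h) * (\<sigma> + (1 - \<sigma>) * v)"
    by (simp add: algebra_simps)
  then have "Z * (v - h) / (\<sigma> + (1 - \<sigma>) * v) \<le> Z * (1 - h)"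
    using positive assms by (simp add: divide_le_eq mult_left_mono mult.assoc)
  then have "exp (Z * (v - h) / (\<sigma> + (1 - \<sigma>) * v)) * smooth_step ((v - T - \<delta>) / \<delta>) \<le> exp (Z * (1 - h))"
    using smooth_step_bounds by (simp add: mult_le_one order_trans[OF mult_right_le_one_le])
  then show "Frate Z h \<sigma> T \<delta> v \<le> exp (Z * (1 - h))"
    unfolding Frate_eq_smooth_step[OF assms(1)] .
  show "0 \<le> Frate Z h \<sigma> T \<delta> v"
    unfolding Frate_eq_smooth_step[OF assms(1)] by (simp add: smooth_step_bounds)
qed

lemma Fw_mult_bounds:
  fixes w y :: "'a \<Rightarrow> real"
  assumes "0 < \<delta>" "0 < \<sigma>" "\<sigma> \<le> 1" "0 \<le> Z" "0 \<le> h"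
    and w: "\<And>x. 0 \<le> w x \<and> w x \<le> 1" and y: "\<And>x. 0 \<le> y x \<and> y x \<le> 1"
  shows "0 \<le> Fw Z h \<sigma> T \<delta> (w x) * y x"
    and "Fw Z h \<sigma> T \<delta> (w x) * y x \<le> (SUP x. Fw Z h \<sigma> T \<delta> (w x) * y x)"
proof -
  have nonneg: "0 \<le> Fw Z h \<sigma> T \<delta> (w x)" for x
    using Fw_nonneg[OF assms(1-3) _ assms(4,5)] w by simp
  then show "0 \<le> Fw Z h \<sigma> T \<delta> (w x) * y x"
    using y by simp
  obtain M where M: "\<And>v. v \<in> {0..1} \<Longrightarrow> Fw Z h \<sigma> T \<delta> v \<le> M"
    using bdd_above_Fw[OF assms(1-3)] by (meson bdd_above.E imageI)
  have "Fw Z h \<sigma> T \<delta> (w x) * y x \<le> M" for x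
  proof -
    have "Fw Z h \<sigma> T \<delta> (w x) * y x \<le> Fw Z h \<sigma> T \<delta> (w x)"
      using nonneg y by (simp add: mult_left_le)
    also have "\<dots> \<le> M"
      using M w by simp
    finally show ?thesis .
  qed
  then show "Fw Z h \<sigma> T \<delta> (w x) * y x \<le> (SUP x. Fw Z h \<sigma> T \<delta> (w x) * y x)"
    by (intro cSUP_upper bdd_aboveI) auto
qed

section \<open>Square-integrable functions on the real line\<close>

lemma integrable_tendsto_at_top_eq_0:
  fixes f :: "real \<Rightarrow> 'a::{banach,second_countable_topology}"
  assumes f: "integrable lborel f" and lim: "(f \<longlongrightarrow> L) at_top"
  shows "L = 0"
proof (rule ccontr)
  assume "L \<noteq> 0"
  then have "norm L / 2 < norm L"
    by simp
  from order_tendstoD(1)[OF tendsto_norm[OF lim] this]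
  obtain M where M: "\<And>x. M \<le> x \<Longrightarrow> norm L / 2 < norm (f x)"
    by (auto simp: eventually_at_top_linorder)
  have bound: "norm L / 2 * real n \<le> (\<integral>x. norm (f x) \<partial>lborel)" for n :: nat
  proof -
    have "(\<integral>x. norm L / 2 * indicator {M..M + real n} x \<partial>lborel) \<le> (\<integral>x. norm (f x) \<partial>lborel)"
      using f M less_imp_le by (intro integral_mono) (auto split: split_indicator)
    then show ?thesis
      by simp
  qed
  obtain n :: nat where "(\<integral>x. norm (f x) \<partial>lborel) / (norm L / 2) < real n"
    using reals_Archimedean2 by blast
  then have "(\<integral>x. norm (f x) \<partial>lborel) < norm L / 2 * real n"
    using \<open>L \<noteq> 0\<close> by (simp add: divide_less_eq mult.commute)
  with bound[of n] show False
    by simp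
qed

lemma integrable_tendsto_at_bot_eq_0:
  fixes f :: "real \<Rightarrow> 'a::{banach,second_countable_topology}"
  assumes "integrable lborel f" and "(f \<longlongrightarrow> L) at_bot"
  shows "L = 0"
proof (rule integrable_tendsto_at_top_eq_0)
  show "integrable lborel (\<lambda>x. f (- x))"
    using assms(1) lborel_integrable_real_affine_iff[of "-1" f 0] by simp
  show "((\<lambda>x. f (- x)) \<longlongrightarrow> L) at_top"
    using assms(2) by (simp add: filterlim_at_bot_mirror)
qed

lemma set_integral_Icc_vector_derivative:
  fixes f f' :: "real \<Rightarrow> 'a::euclidean_space"
  assumes "\<And>x. (f has_vector_derivative f' x) (at x)" and "integrable lborel f'" and "a \<le> b"
  shows "(LINT x:{a..b}|lborel. f' x) = f b - f a"
proof -
  have "set_integrable lborel {a..b} f'"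
    unfolding set_integrable_def by (rule integrable_mult_indicator) (auto simp: assms(2))
  moreover have "(f' has_integral (f b - f a)) {a..b}"
    using assms(1,3) by (intro fundamental_theorem_of_calculus) (auto intro: has_vector_derivative_at_within)
  ultimately show ?thesis
    using set_borel_integral_eq_integral(2) by (metis integral_unique)
qed

lemma set_integral_Ici_vector_derivative:
  fixes f f' :: "real \<Rightarrow> 'a::euclidean_space"
  assumes deriv: "\<And>x. (f has_vector_derivative f' x) (at x)"
    and f: "integrable lborel f" and f': "integrable lborel f'"
  shows "(LINT x:{0..}|lborel. f' x) = - f 0"
proof -
  have "((\<lambda>b. f 0 + (LINT x:{0..b}|lborel. f' x)) \<longlongrightarrow> f 0 + (LINT x:{0..}|lborel. f' x)) at_top"
    using f' by (intro tendsto_add tendsto_const tendsto_set_lebesgue_integral_at_top)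
      (auto simp: set_integrable_def intro: integrable_mult_indicator)
  moreover have "\<forall>\<^sub>F b in at_top. f 0 + (LINT x:{0..b}|lborel. f' x) = f b"
    unfolding eventually_at_top_linorder
    by (rule exI[of _ 0]) (auto simp: set_integral_Icc_vector_derivative[OF deriv f'])
  ultimately have "(f \<longlongrightarrow> f 0 + (LINT x:{0..}|lborel. f' x)) at_top"
    by (rule Lim_transform_eventually)
  then show ?thesis
    using integrable_tendsto_at_top_eq_0[OF f] by (simp add: eq_neg_iff_add_eq_0 add.commute)
qed

lemma set_integral_Iic_vector_derivative:
  fixes f f' :: "real \<Rightarrow> 'a::euclidean_space"
  assumes deriv: "\<And>x. (f has_vector_derivative f' x) (at x)"
    and f: "integrable lborel f" and f': "integrable lborel f'"
  shows "(LINT x:{..0}|lborel. f' x) = f 0"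
proof -
  have "((\<lambda>a. f 0 - (LINT x:{a..0}|lborel. f' x)) \<longlongrightarrow> f 0 - (LINT x:{..0}|lborel. f' x)) at_bot"
    using f' by (intro tendsto_diff tendsto_const tendsto_set_lebesgue_integral_at_bot)
      (auto simp: set_integrable_def intro: integrable_mult_indicator)
  moreover have "\<forall>\<^sub>F a in at_bot. f 0 - (LINT x:{a..0}|lborel. f' x) = f a"
    unfolding eventually_at_bot_linorder
    by (rule exI[of _ 0]) (auto simp: set_integral_Icc_vector_derivative[OF deriv f'])
  ultimately have "(f \<longlongrightarrow> f 0 - (LINT x:{..0}|lborel. f' x)) at_bot"
    by (rule Lim_transform_eventually)
  then have "f 0 - (LINT x:{..0}|lborel. f' x) = 0"
    by (rule integrable_tendsto_at_bot_eq_0[OF f])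
  then show ?thesis
    by simp
qed

lemma integral_vector_derivative_eq_0:
  fixes f f' :: "real \<Rightarrow> 'a::euclidean_space"
  assumes deriv: "\<And>x. (f has_vector_derivative f' x) (at x)"
    and f: "integrable lborel f" and f': "integrable lborel f'"
  shows "integral\<^sup>L lborel f' = 0"
proof -
  have set_integrable: "set_integrable lborel A f'" if "A \<in> sets lborel" for A
    unfolding set_integrable_def by (rule integrable_mult_indicator[OF that f'])
  have "(LINT x:{0<..}|lborel. f' x) = (LINT x:{0..}|lborel. f' x)"
  proof (rule set_integral_cong_set)
    show "set_borel_measurable lborel {0..} f'" "set_borel_measurable lborel {0<..} f'"
      using set_integrable[of "{0..}"] set_integrable[of "{0<..}"]
      unfolding set_integrable_def set_borel_measurable_def by auto
    show "AE x in lborel. (x \<in> {0..}) = (x \<in> {0::real<..})"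
      by (rule eventually_mono[OF AE_lborel_singleton[of "0::real"]]) auto
  qed
  moreover have "(LINT x:({..0} \<union> {0<..})|lborel. f' x)
      = (LINT x:{..0}|lborel. f' x) + (LINT x:{0<..}|lborel. f' x)"
    by (rule set_integral_Un) (auto intro: set_integrable)
  moreover have "{..0} \<union> {0<..} = (UNIV :: real set)"
    by auto
  ultimately show ?thesis
    using set_integral_Iic_vector_derivative[OF assms] set_integral_Ici_vector_derivative[OF assms]
    by (simp add: set_lebesgue_integral_def)
qed

lemma integrable_mult_cnj:
  fixes f g :: "'a \<Rightarrow> complex"
  assumes "f \<in> borel_measurable M" "g \<in> borel_measurable M"
    and "integrable M (\<lambda>x. (cmod (f x))\<^sup>2)" "integrable M (\<lambda>x. (cmod (g x))\<^sup>2)"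
  shows "integrable M (\<lambda>x. f x * cnj (g x))"
proof (rule Bochner_Integration.integrable_bound)
  show "integrable M (\<lambda>x. (cmod (f x))\<^sup>2 + (cmod (g x))\<^sup>2)"
    using assms by simp
  have "(\<lambda>x. cnj (g x)) \<in> borel_measurable M"
    using assms(2) by (rule borel_measurable_continuous_on[OF continuous_on_cnj[OF continuous_on_id]])
  then show "(\<lambda>x. f x * cnj (g x)) \<in> borel_measurable M"
    by (rule borel_measurable_times[OF assms(1)])
  show "AE x in M. norm (f x * cnj (g x)) \<le> norm ((cmod (f x))\<^sup>2 + (cmod (g x))\<^sup>2)"
  proof (rule AE_I2)
    fix x
    have "2 * cmod (f x) * cmod (g x) \<le> (cmod (f x))\<^sup>2 + (cmod (g x))\<^sup>2"
      by (rule sum_squares_bound)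
    moreover have "0 \<le> cmod (f x) * cmod (g x)"
      by simp
    moreover have "norm (f x * cnj (g x)) = cmod (f x) * cmod (g x)"
      by (simp add: norm_mult)
    moreover have "norm ((cmod (f x))\<^sup>2 + (cmod (g x))\<^sup>2) = (cmod (f x))\<^sup>2 + (cmod (g x))\<^sup>2"
      by simp
    ultimately show "norm (f x * cnj (g x)) \<le> norm ((cmod (f x))\<^sup>2 + (cmod (g x))\<^sup>2)"
      by linarith
  qed
qed

lemma integral_mult_cnj_self:
  "(\<integral>x. f x * cnj (f x) \<partial>M) = of_real (\<integral>x. (cmod (f x))\<^sup>2 \<partial>M)"
proof -
  have "(\<lambda>x. f x * cnj (f x)) = (\<lambda>x. of_real ((cmod (f x))\<^sup>2))"
    by (simp only: complex_norm_square)
  then show ?thesis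
    by (simp only: integral_complex_of_real)
qed

lemma H2_integrable_mult_cnj:
  assumes "H2 p p' p''"
  shows "integrable lborel (\<lambda>x. p x * cnj (p x))" "integrable lborel (\<lambda>x. p' x * cnj (p x))"
    "integrable lborel (\<lambda>x. p'' x * cnj (p x))" "integrable lborel (\<lambda>x. p x * cnj (p' x))"
    "integrable lborel (\<lambda>x. p' x * cnj (p' x))"
  using assms unfolding H2_def by (auto intro: integrable_mult_cnj)

lemma H2_integral_deriv2_mult_cnj:
  assumes "H2 p p' p''"
  shows "(\<integral>x. p'' x * cnj (p x) \<partial>lborel) = - of_real (\<integral>x. (cmod (p' x))\<^sup>2 \<partial>lborel)"
proof -
  note integrable = H2_integrable_mult_cnj[OF assms]
  have "(\<integral>x. p' x * cnj (p' x) + p'' x * cnj (p x) \<partial>lborel) = 0"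
  proof (rule integral_vector_derivative_eq_0[OF _ integrable(2)])
    show "((\<lambda>x. p' x * cnj (p x)) has_vector_derivative p' x * cnj (p' x) + p'' x * cnj (p x)) (at x)"
      for x using assms unfolding H2_def
      by (auto intro!: derivative_eq_intros has_vector_derivative_cnj)
    show "integrable lborel (\<lambda>x. p' x * cnj (p' x) + p'' x * cnj (p x))"
      using integrable by simp
  qed
  then have "(\<integral>x. p' x * cnj (p' x) \<partial>lborel) + (\<integral>x. p'' x * cnj (p x) \<partial>lborel) = 0"
    using integrable by simp
  then show ?thesis
    unfolding integral_mult_cnj_self by (metis add_eq_0_iff)
qed

lemma H2_Re_integral_deriv_mult_cnj:
  assumes "H2 p p' p''"
  shows "Re (\<integral>x. p' x * cnj (p x) \<partial>lborel) = 0"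
proof -
  note integrable = H2_integrable_mult_cnj[OF assms]
  have "(\<integral>x. p x * cnj (p' x) + p' x * cnj (p x) \<partial>lborel) = 0"
  proof (rule integral_vector_derivative_eq_0[OF _ integrable(1)])
    show "((\<lambda>x. p x * cnj (p x)) has_vector_derivative p x * cnj (p' x) + p' x * cnj (p x)) (at x)"
      for x using assms unfolding H2_def
      by (auto intro!: derivative_eq_intros has_vector_derivative_cnj)
    show "integrable lborel (\<lambda>x. p x * cnj (p' x) + p' x * cnj (p x))"
      using integrable by simp
  qed
  moreover have "(\<integral>x. p x * cnj (p' x) \<partial>lborel) = cnj (\<integral>x. p' x * cnj (p x) \<partial>lborel)"
  proof -
    have "(\<lambda>x. p x * cnj (p' x)) = (\<lambda>x. cnj (p' x * cnj (p x)))"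
      by (simp add: fun_eq_iff mult.commute)
    then show ?thesis
      by (simp only: Bochner_Integration.integral_cnj)
  qed
  ultimately have "cnj (\<integral>x. p' x * cnj (p x) \<partial>lborel) + (\<integral>x. p' x * cnj (p x) \<partial>lborel) = 0"
    using integrable by simp
  then have "Re (cnj (\<integral>x. p' x * cnj (p x) \<partial>lborel) + (\<integral>x. p' x * cnj (p x) \<partial>lborel)) = 0"
    by simp
  then show ?thesis
    by simp
qed

lemma integral_pos_continuous:
  fixes f :: "real \<Rightarrow> real"
  assumes cont: "\<And>x. isCont f x" and nonneg: "\<And>x. 0 \<le> f x" and f: "integrable lborel f"
    and pos: "0 < f x0"
  shows "0 < integral\<^sup>L lborel f"
proof -
  have "f x0 / 2 < f x0"
    using pos by simp
  from order_tendstoD(1)[OF cont[of x0, unfolded isCont_def] this]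
  obtain d where "0 < d" and d: "\<And>x. x \<noteq> x0 \<Longrightarrow> dist x x0 < d \<Longrightarrow> f x0 / 2 < f x"
    by (auto simp: eventually_at)
  have "f x0 / 2 * indicator {x0 - d / 2..x0 + d / 2} x \<le> f x" for x
    using d[of x] nonneg[of x] \<open>0 < d\<close> pos by (cases "x = x0") (auto simp: dist_real_def abs_less_iff split: split_indicator)
  then have "(\<integral>x. f x0 / 2 * indicator {x0 - d / 2..x0 + d / 2} x \<partial>lborel) \<le> integral\<^sup>L lborel f"
    using f \<open>0 < d\<close> by (intro integral_mono integrable_mult_right integrable_real_indicator) auto
  moreover have "(\<integral>x. f x0 / 2 * indicator {x0 - d / 2..x0 + d / 2} x \<partial>lborel) = f x0 / 2 * d"
    using \<open>0 < d\<close> by simp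
  moreover have "0 < f x0 / 2 * d"
    using \<open>0 < d\<close> pos by simp
  ultimately show ?thesis
    by linarith
qed

section \<open>Pointwise estimates\<close>

text \<open>The reaction term of the linearised system, with \<open>\<alpha> = F_w(w) y\<close> and \<open>\<beta> = F(w)\<close>.\<close>
definition coupling :: "real \<Rightarrow> real \<Rightarrow> real \<Rightarrow> complex \<Rightarrow> complex \<Rightarrow> complex" where
  "coupling h \<alpha> \<beta> P Q = of_real \<alpha> * (of_real h * P - of_real (1 - h) * Q) + of_real \<beta> * Q"

lemma Re_coupling_mult_cnj:
  "Re (coupling h \<alpha> \<beta> P Q * (cnj P - cnj Q))
     = \<alpha> * (h * (cmod P)\<^sup>2 + (1 - h) * (cmod Q)\<^sup>2 - Re (Q * cnj P)) + \<beta> * (Re (Q * cnj P) - (cmod Q)\<^sup>2)"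
  unfolding coupling_def cmod_power2 by (cases P; cases Q) (simp add: algebra_simps power2_eq_square)

lemma Im_coupling_mult_cnj:
  "Im (coupling h \<alpha> \<beta> P Q * (cnj P - cnj Q)) = (\<alpha> * (2 * h - 1) + \<beta>) * Im (Q * cnj P)"
  by (cases P; cases Q) (simp add: coupling_def algebra_simps)

lemma abs_Re_Im_mult_cnj_le:
  "\<bar>Re (Q * cnj P)\<bar> \<le> cmod P * cmod Q" "\<bar>Im (Q * cnj P)\<bar> \<le> cmod P * cmod Q"
  using abs_Re_le_cmod[of "Q * cnj P"] abs_Im_le_cmod[of "Q * cnj P"]
  by (simp_all add: norm_mult mult.commute)

lemma Re_coupling_mult_cnj_le:
  assumes "0 \<le> \<alpha>" "\<alpha> \<le> A" "0 \<le> \<beta>" "\<beta> \<le> B" "0 \<le> h" "h \<le> 1"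
  shows "Re (coupling h \<alpha> \<beta> P Q * (cnj P - cnj Q)) \<le> (3 / 2 * A + B) * ((cmod P)\<^sup>2 + (cmod Q)\<^sup>2)"
proof -
  define s t u where "s = cmod P" and "t = cmod Q" and "u = Re (Q * cnj P)"
  have "\<bar>u\<bar> \<le> s * t"
    unfolding s_def t_def u_def by (rule abs_Re_Im_mult_cnj_le)
  then have "u \<le> s * t" "- u \<le> s * t"
    by (simp_all add: abs_le_iff)
  moreover have "2 * (s * t) \<le> s\<^sup>2 + t\<^sup>2"
    using sum_squares_bound[of s t] by (simp add: mult.assoc)
  moreover have "0 \<le> s\<^sup>2" "0 \<le> t\<^sup>2"
    by simp_all
  ultimately have u: "- (2 * u) \<le> s\<^sup>2 + t\<^sup>2" "u - t\<^sup>2 \<le> s\<^sup>2 + t\<^sup>2"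
    by (linarith, linarith)
  have "h * s\<^sup>2 \<le> s\<^sup>2" "(1 - h) * t\<^sup>2 \<le> t\<^sup>2"
    using assms(5,6) by (simp_all add: mult_left_le_one_le)
  then have "\<alpha> * (h * s\<^sup>2 + (1 - h) * t\<^sup>2 - u) \<le> \<alpha> * (3 / 2 * (s\<^sup>2 + t\<^sup>2))"
    using assms(1,3,5,6) u by (intro mult_left_mono) auto
  moreover have "\<beta> * (u - t\<^sup>2) \<le> \<beta> * (s\<^sup>2 + t\<^sup>2)"
    using assms(1,3,5,6) u by (intro mult_left_mono) auto
  ultimately have "Re (coupling h \<alpha> \<beta> P Q * (cnj P - cnj Q)) \<le> (3 / 2 * \<alpha> + \<beta>) * (s\<^sup>2 + t\<^sup>2)"
    unfolding Re_coupling_mult_cnj s_def [symmetric] t_def [symmetric] u_def [symmetric]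
    by (simp add: algebra_simps)
  also have "\<dots> \<le> (3 / 2 * A + B) * (s\<^sup>2 + t\<^sup>2)"
    using assms by (intro mult_right_mono add_mono) auto
  finally show ?thesis
    unfolding s_def t_def .
qed

lemma Re_plus_abs_Im_coupling_mult_cnj_le:
  assumes "0 \<le> \<alpha>" "\<alpha> \<le> A" "0 \<le> \<beta>" "\<beta> \<le> B" "0 \<le> h" "h \<le> 1"
  shows "Re (coupling h \<alpha> \<beta> P Q * (cnj P - cnj Q)) + \<bar>Im (coupling h \<alpha> \<beta> P Q * (cnj P - cnj Q))\<bar>
    \<le> (2 * A + B) * ((cmod P)\<^sup>2 + (cmod Q)\<^sup>2)"
proof -
  define s t u v where "s = cmod P" and "t = cmod Q" and "u = Re (Q * cnj P)" and "v = Im (Q * cnj P)"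
  have "\<bar>u\<bar> \<le> s * t" and v: "\<bar>v\<bar> \<le> s * t"
    unfolding s_def t_def u_def v_def by (rule abs_Re_Im_mult_cnj_le)+
  then have "u \<le> s * t" "- u \<le> s * t"
    by (simp_all add: abs_le_iff)
  moreover have "2 * (s * t) \<le> s\<^sup>2 + t\<^sup>2"
    using sum_squares_bound[of s t] by (simp add: mult.assoc)
  moreover have "0 \<le> s\<^sup>2" "0 \<le> t\<^sup>2"
    by simp_all
  ultimately have u: "s * t - u \<le> s\<^sup>2 + t\<^sup>2" "u - t\<^sup>2 + s * t \<le> s\<^sup>2 + t\<^sup>2"
    by (linarith, linarith)
  have "\<bar>2 * h - 1\<bar> \<le> 1"
    using assms by (simp add: abs_le_iff)
  then have "\<bar>\<alpha> * (2 * h - 1)\<bar> \<le> \<alpha>"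
    using assms mult_right_le_one_le[of \<alpha> "\<bar>2 * h - 1\<bar>"] by (simp add: abs_mult)
  then have "\<bar>\<alpha> * (2 * h - 1) + \<beta>\<bar> \<le> \<alpha> + \<beta>"
    using assms(3) by linarith
  then have "\<bar>(\<alpha> * (2 * h - 1) + \<beta>) * v\<bar> \<le> \<alpha> * (s * t) + \<beta> * (s * t)"
    using v by (simp add: abs_mult distrib_right[symmetric] mult_mono)
  moreover have "h * s\<^sup>2 \<le> s\<^sup>2" "(1 - h) * t\<^sup>2 \<le> t\<^sup>2"
    using assms(5,6) by (simp_all add: mult_left_le_one_le)
  then have "\<alpha> * (h * s\<^sup>2 + (1 - h) * t\<^sup>2 - u + s * t) \<le> \<alpha> * (2 * (s\<^sup>2 + t\<^sup>2))"
    using assms(1,3,5,6) u by (intro mult_left_mono) auto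
  moreover have "\<beta> * (u - t\<^sup>2 + s * t) \<le> \<beta> * (s\<^sup>2 + t\<^sup>2)"
    using assms(1,3,5,6) u by (intro mult_left_mono) auto
  ultimately have "Re (coupling h \<alpha> \<beta> P Q * (cnj P - cnj Q)) + \<bar>Im (coupling h \<alpha> \<beta> P Q * (cnj P - cnj Q))\<bar>
      \<le> (2 * \<alpha> + \<beta>) * (s\<^sup>2 + t\<^sup>2)"
    unfolding Re_coupling_mult_cnj Im_coupling_mult_cnj
      s_def [symmetric] t_def [symmetric] u_def [symmetric] v_def [symmetric]
    by (simp add: algebra_simps)
  also have "\<dots> \<le> (2 * A + B) * (s\<^sup>2 + t\<^sup>2)"
    using assms by (intro mult_right_mono add_mono) auto
  finally show ?thesis
    unfolding s_def t_def .
qed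

lemma mult_le_weighted_squares:
  fixes c s t \<epsilon> :: real
  assumes "0 < \<epsilon>"
  shows "c * (s * t) \<le> \<epsilon> * s\<^sup>2 + c\<^sup>2 / (4 * \<epsilon>) * t\<^sup>2"
proof -
  have "0 \<le> (2 * \<epsilon> * s - c * t)\<^sup>2 / (4 * \<epsilon>)"
    using assms by simp
  also have "\<dots> = \<epsilon> * s\<^sup>2 + c\<^sup>2 / (4 * \<epsilon>) * t\<^sup>2 - c * (s * t)"
    using assms by (simp add: power2_eq_square field_simps)
  finally show ?thesis
    by simp
qed

section \<open>Energy estimates\<close>

lemma H2_energy_identity:
  fixes r :: "real \<Rightarrow> complex"
  assumes Hp: "H2 p p' p''" and Hq: "H2 q q' q''"
    and eq_p: "\<And>x. lam * p x = p'' x + of_real c * p' x + r x"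
    and eq_q: "\<And>x. lam * q x = of_real \<epsilon> * q'' x + of_real c * q' x - r x"
  shows "integrable lborel (\<lambda>x. r x * (cnj (p x) - cnj (q x)))"
    and "lam * of_real ((\<integral>x. (cmod (p x))\<^sup>2 \<partial>lborel) + (\<integral>x. (cmod (q x))\<^sup>2 \<partial>lborel))
      = (\<integral>x. r x * (cnj (p x) - cnj (q x)) \<partial>lborel)
        - of_real ((\<integral>x. (cmod (p' x))\<^sup>2 \<partial>lborel) + \<epsilon> * (\<integral>x. (cmod (q' x))\<^sup>2 \<partial>lborel))
        + of_real c * ((\<integral>x. p' x * cnj (p x) \<partial>lborel) + (\<integral>x. q' x * cnj (q x) \<partial>lborel))"
proof -
  note ip = H2_integrable_mult_cnj[OF Hp] and iq = H2_integrable_mult_cnj[OF Hq]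
  have "r x * (cnj (p x) - cnj (q x))
      = lam * (p x * cnj (p x)) + lam * (q x * cnj (q x)) - p'' x * cnj (p x)
        - of_real \<epsilon> * (q'' x * cnj (q x)) - of_real c * (p' x * cnj (p x)) - of_real c * (q' x * cnj (q x))"
    for x using eq_p[of x] eq_q[of x] by algebra
  then have pointwise: "(\<lambda>x. r x * (cnj (p x) - cnj (q x)))
      = (\<lambda>x. lam * (p x * cnj (p x)) + lam * (q x * cnj (q x)) - p'' x * cnj (p x)
        - of_real \<epsilon> * (q'' x * cnj (q x)) - of_real c * (p' x * cnj (p x)) - of_real c * (q' x * cnj (q x)))"
    by blast
  show "integrable lborel (\<lambda>x. r x * (cnj (p x) - cnj (q x)))"
    unfolding pointwise using ip iq by simp
  show "lam * of_real ((\<integral>x. (cmod (p x))\<^sup>2 \<partial>lborel) + (\<integral>x. (cmod (q x))\<^sup>2 \<partial>lborel))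
      = (\<integral>x. r x * (cnj (p x) - cnj (q x)) \<partial>lborel)
        - of_real ((\<integral>x. (cmod (p' x))\<^sup>2 \<partial>lborel) + \<epsilon> * (\<integral>x. (cmod (q' x))\<^sup>2 \<partial>lborel))
        + of_real c * ((\<integral>x. p' x * cnj (p x) \<partial>lborel) + (\<integral>x. q' x * cnj (q x) \<partial>lborel))"
    unfolding pointwise using ip iq
    by (simp add: H2_integral_deriv2_mult_cnj[OF Hp] H2_integral_deriv2_mult_cnj[OF Hq]
        integral_mult_cnj_self algebra_simps)
qed

lemma H2_norm_sum_pos:
  assumes Hp: "H2 p p' p''" and Hq: "H2 q q' q''" and nonzero: "p x0 \<noteq> 0 \<or> q x0 \<noteq> 0"
  shows "0 < (\<integral>x. (cmod (p x))\<^sup>2 \<partial>lborel) + (\<integral>x. (cmod (q x))\<^sup>2 \<partial>lborel)"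
proof -
  have "0 < (\<integral>x. (cmod (p x))\<^sup>2 + (cmod (q x))\<^sup>2 \<partial>lborel)"
  proof (rule integral_pos_continuous)
    have "isCont p x" "isCont q x" for x
      using Hp Hq unfolding H2_def by (auto intro: has_vector_derivative_continuous)
    then show "isCont (\<lambda>x. (cmod (p x))\<^sup>2 + (cmod (q x))\<^sup>2) x" for x
      by (intro continuous_intros)
    show "integrable lborel (\<lambda>x. (cmod (p x))\<^sup>2 + (cmod (q x))\<^sup>2)"
      using Hp Hq unfolding H2_def by simp
    show "0 < (cmod (p x0))\<^sup>2 + (cmod (q x0))\<^sup>2"
      using nonzero by (auto intro: add_pos_nonneg add_nonneg_pos)
  qed simp
  then show ?thesis
    using Hp Hq unfolding H2_def by simp
qed

lemma H2_abs_Im_integral_deriv_mult_cnj_le: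
  assumes "H2 p p' p''" and "0 < \<epsilon>"
  shows "\<bar>c * Im (\<integral>x. p' x * cnj (p x) \<partial>lborel)\<bar>
    \<le> \<epsilon> * (\<integral>x. (cmod (p' x))\<^sup>2 \<partial>lborel) + c\<^sup>2 / (4 * \<epsilon>) * (\<integral>x. (cmod (p x))\<^sup>2 \<partial>lborel)"
proof -
  have integrable: "integrable lborel (\<lambda>x. cmod (p' x) * cmod (p x))"
    using integrable_norm[OF H2_integrable_mult_cnj(2)[OF assms(1)]] by (simp add: norm_mult)
  have "\<bar>Im (\<integral>x. p' x * cnj (p x) \<partial>lborel)\<bar> \<le> cmod (\<integral>x. p' x * cnj (p x) \<partial>lborel)"
    by (rule abs_Im_le_cmod)
  also have "\<dots> \<le> (\<integral>x. cmod (p' x * cnj (p x)) \<partial>lborel)"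
    by (rule integral_norm_bound)
  finally have "\<bar>Im (\<integral>x. p' x * cnj (p x) \<partial>lborel)\<bar> \<le> (\<integral>x. cmod (p' x) * cmod (p x) \<partial>lborel)"
    by (simp add: norm_mult)
  then have "\<bar>c * Im (\<integral>x. p' x * cnj (p x) \<partial>lborel)\<bar> \<le> (\<integral>x. \<bar>c\<bar> * (cmod (p' x) * cmod (p x)) \<partial>lborel)"
    by (simp add: abs_mult mult_left_mono)
  also have "\<dots> \<le> (\<integral>x. \<epsilon> * (cmod (p' x))\<^sup>2 + c\<^sup>2 / (4 * \<epsilon>) * (cmod (p x))\<^sup>2 \<partial>lborel)"
    using integrable assms mult_le_weighted_squares[OF assms(2), of "\<bar>c\<bar>"]
    by (intro integral_mono) (auto simp: H2_def)
  also have "\<dots> = \<epsilon> * (\<integral>x. (cmod (p' x))\<^sup>2 \<partial>lborel) + c\<^sup>2 / (4 * \<epsilon>) * (\<integral>x. (cmod (p x))\<^sup>2 \<partial>lborel)"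
    using assms(1) by (simp add: H2_def)
  finally show ?thesis .
qed

lemma H2_energy_Re:
  fixes r :: "real \<Rightarrow> complex"
  assumes Hp: "H2 p p' p''" and Hq: "H2 q q' q''"
    and eq_p: "\<And>x. lam * p x = p'' x + of_real c * p' x + r x"
    and eq_q: "\<And>x. lam * q x = of_real \<epsilon> * q'' x + of_real c * q' x - r x"
  shows "Re lam * ((\<integral>x. (cmod (p x))\<^sup>2 \<partial>lborel) + (\<integral>x. (cmod (q x))\<^sup>2 \<partial>lborel))
    = (\<integral>x. Re (r x * (cnj (p x) - cnj (q x))) \<partial>lborel)
      - (\<integral>x. (cmod (p' x))\<^sup>2 \<partial>lborel) - \<epsilon> * (\<integral>x. (cmod (q' x))\<^sup>2 \<partial>lborel)"
proof -
  define \<rho> where "\<rho> x = r x * (cnj (p x) - cnj (q x))" for x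
  have "integrable lborel \<rho>"
    using H2_energy_identity(1)[OF assms] by (simp add: \<rho>_def[abs_def])
  then have "Re (integral\<^sup>L lborel \<rho>) = (\<integral>x. Re (\<rho> x) \<partial>lborel)"
    by simp
  moreover have "Re lam * ((\<integral>x. (cmod (p x))\<^sup>2 \<partial>lborel) + (\<integral>x. (cmod (q x))\<^sup>2 \<partial>lborel))
      = Re (integral\<^sup>L lborel \<rho>) - (\<integral>x. (cmod (p' x))\<^sup>2 \<partial>lborel) - \<epsilon> * (\<integral>x. (cmod (q' x))\<^sup>2 \<partial>lborel)"
    using arg_cong[OF H2_energy_identity(2)[OF assms], of Re]
      H2_Re_integral_deriv_mult_cnj[OF Hp] H2_Re_integral_deriv_mult_cnj[OF Hq]
    unfolding \<rho>_def[abs_def] by simp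
  ultimately show ?thesis
    unfolding \<rho>_def[symmetric] by simp
qed

lemma H2_energy_abs_Im_le:
  fixes r :: "real \<Rightarrow> complex"
  assumes Hp: "H2 p p' p''" and Hq: "H2 q q' q''"
    and eq_p: "\<And>x. lam * p x = p'' x + of_real c * p' x + r x"
    and eq_q: "\<And>x. lam * q x = of_real \<epsilon> * q'' x + of_real c * q' x - r x"
    and "0 < \<epsilon>"
  shows "\<bar>Im lam\<bar> * ((\<integral>x. (cmod (p x))\<^sup>2 \<partial>lborel) + (\<integral>x. (cmod (q x))\<^sup>2 \<partial>lborel))
    \<le> (\<integral>x. \<bar>Im (r x * (cnj (p x) - cnj (q x)))\<bar> \<partial>lborel)
      + ((\<integral>x. (cmod (p' x))\<^sup>2 \<partial>lborel) + c\<^sup>2 / 4 * (\<integral>x. (cmod (p x))\<^sup>2 \<partial>lborel))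
      + (\<epsilon> * (\<integral>x. (cmod (q' x))\<^sup>2 \<partial>lborel) + c\<^sup>2 / (4 * \<epsilon>) * (\<integral>x. (cmod (q x))\<^sup>2 \<partial>lborel))"
proof -
  define \<rho> where "\<rho> x = r x * (cnj (p x) - cnj (q x))" for x
  define N where "N = (\<integral>x. (cmod (p x))\<^sup>2 \<partial>lborel) + (\<integral>x. (cmod (q x))\<^sup>2 \<partial>lborel)"
  define I where "I = (\<integral>x. Im (\<rho> x) \<partial>lborel)"
  define Jp where "Jp = (\<integral>x. p' x * cnj (p x) \<partial>lborel)"
  define Jq where "Jq = (\<integral>x. q' x * cnj (q x) \<partial>lborel)"
  have "integrable lborel \<rho>"
    using H2_energy_identity(1)[OF Hp Hq eq_p eq_q] by (simp add: \<rho>_def[abs_def])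
  then have "Im lam * N = I + c * Im Jp + c * Im Jq"
    using arg_cong[OF H2_energy_identity(2)[OF Hp Hq eq_p eq_q], of Im]
    unfolding \<rho>_def[symmetric] N_def I_def Jp_def Jq_def by (simp add: algebra_simps)
  moreover have "0 \<le> N"
    unfolding N_def by (simp add: Bochner_Integration.integral_nonneg)
  ultimately have "\<bar>Im lam\<bar> * N = \<bar>I + c * Im Jp + c * Im Jq\<bar>"
    by (metis abs_mult abs_of_nonneg)
  also have "\<dots> \<le> \<bar>I\<bar> + \<bar>c * Im Jp\<bar> + \<bar>c * Im Jq\<bar>"
    using abs_triangle_ineq[of "I + c * Im Jp" "c * Im Jq"] abs_triangle_ineq[of I "c * Im Jp"] by linarith
  also have "\<dots> \<le> (\<integral>x. \<bar>Im (\<rho> x)\<bar> \<partial>lborel)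
      + ((\<integral>x. (cmod (p' x))\<^sup>2 \<partial>lborel) + c\<^sup>2 / 4 * (\<integral>x. (cmod (p x))\<^sup>2 \<partial>lborel))
      + (\<epsilon> * (\<integral>x. (cmod (q' x))\<^sup>2 \<partial>lborel) + c\<^sup>2 / (4 * \<epsilon>) * (\<integral>x. (cmod (q x))\<^sup>2 \<partial>lborel))"
  proof (intro add_mono)
    show "\<bar>I\<bar> \<le> (\<integral>x. \<bar>Im (\<rho> x)\<bar> \<partial>lborel)"
      using integral_norm_bound[of lborel "\<lambda>x. Im (\<rho> x)"] unfolding I_def by simp
    show "\<bar>c * Im Jp\<bar> \<le> (\<integral>x. (cmod (p' x))\<^sup>2 \<partial>lborel) + c\<^sup>2 / 4 * (\<integral>x. (cmod (p x))\<^sup>2 \<partial>lborel)"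
      using H2_abs_Im_integral_deriv_mult_cnj_le[OF Hp, of 1 c] unfolding Jp_def by simp
    show "\<bar>c * Im Jq\<bar> \<le> \<epsilon> * (\<integral>x. (cmod (q' x))\<^sup>2 \<partial>lborel) + c\<^sup>2 / (4 * \<epsilon>) * (\<integral>x. (cmod (q x))\<^sup>2 \<partial>lborel)"
      using H2_abs_Im_integral_deriv_mult_cnj_le[OF Hq \<open>0 < \<epsilon>\<close>, of c] unfolding Jq_def .
  qed
  finally show ?thesis
    unfolding N_def \<rho>_def .
qed

lemma coupled_eigenvalue_Re_le:
  fixes a b :: "real \<Rightarrow> real"
  assumes Hp: "H2 p p' p''" and Hq: "H2 q q' q''" and nonzero: "p x0 \<noteq> 0 \<or> q x0 \<noteq> 0"
    and eq_p: "\<And>x. lam * p x = p'' x + of_real c * p' x + coupling h (a x) (b x) (p x) (q x)"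
    and eq_q: "\<And>x. lam * q x = of_real \<epsilon> * q'' x + of_real c * q' x - coupling h (a x) (b x) (p x) (q x)"
    and "0 \<le> \<epsilon>" "0 \<le> h" "h \<le> 1"
    and a: "\<And>x. 0 \<le> a x" "\<And>x. a x \<le> A" and b: "\<And>x. 0 \<le> b x" "\<And>x. b x \<le> B"
  shows "Re lam \<le> 3 / 2 * A + B"
proof -
  define \<rho> where "\<rho> x = coupling h (a x) (b x) (p x) (q x) * (cnj (p x) - cnj (q x))" for x
  define N where "N = (\<integral>x. (cmod (p x))\<^sup>2 \<partial>lborel) + (\<integral>x. (cmod (q x))\<^sup>2 \<partial>lborel)"
  have "0 \<le> (\<integral>x. (cmod (p' x))\<^sup>2 \<partial>lborel)" "0 \<le> \<epsilon> * (\<integral>x. (cmod (q' x))\<^sup>2 \<partial>lborel)"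
    using \<open>0 \<le> \<epsilon>\<close> by (simp_all add: Bochner_Integration.integral_nonneg)
  then have "Re lam * N \<le> (\<integral>x. Re (\<rho> x) \<partial>lborel)"
    using H2_energy_Re[OF Hp Hq eq_p eq_q] unfolding N_def \<rho>_def by linarith
  also have "\<dots> \<le> (\<integral>x. (3 / 2 * A + B) * ((cmod (p x))\<^sup>2 + (cmod (q x))\<^sup>2) \<partial>lborel)"
  proof (rule integral_mono)
    have "integrable lborel \<rho>"
      using H2_energy_identity(1)[OF Hp Hq eq_p eq_q] by (simp add: \<rho>_def[abs_def])
    then show "integrable lborel (\<lambda>x. Re (\<rho> x))"
      by simp
    show "integrable lborel (\<lambda>x. (3 / 2 * A + B) * ((cmod (p x))\<^sup>2 + (cmod (q x))\<^sup>2))"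
      using Hp Hq unfolding H2_def by simp
    show "Re (\<rho> x) \<le> (3 / 2 * A + B) * ((cmod (p x))\<^sup>2 + (cmod (q x))\<^sup>2)" for x
      unfolding \<rho>_def using a b assms(7,8) by (intro Re_coupling_mult_cnj_le)
  qed
  also have "\<dots> = (3 / 2 * A + B) * N"
    using Hp Hq unfolding N_def H2_def by simp
  finally show ?thesis
    using H2_norm_sum_pos[OF Hp Hq nonzero] unfolding N_def by simp
qed

lemma coupled_eigenvalue_cmod_le:
  fixes a b :: "real \<Rightarrow> real"
  assumes Hp: "H2 p p' p''" and Hq: "H2 q q' q''" and nonzero: "p x0 \<noteq> 0 \<or> q x0 \<noteq> 0"
    and eq_p: "\<And>x. lam * p x = p'' x + of_real c * p' x + coupling h (a x) (b x) (p x) (q x)"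
    and eq_q: "\<And>x. lam * q x = of_real \<epsilon> * q'' x + of_real c * q' x - coupling h (a x) (b x) (p x) (q x)"
    and "0 < \<epsilon>" "0 \<le> h" "h \<le> 1" "0 \<le> Re lam"
    and a: "\<And>x. 0 \<le> a x" "\<And>x. a x \<le> A" and b: "\<And>x. 0 \<le> b x" "\<And>x. b x \<le> B"
  shows "cmod lam \<le> c\<^sup>2 / 4 * max 1 (1 / \<epsilon>) + 2 * A + B"
proof -
  define \<rho> where "\<rho> x = coupling h (a x) (b x) (p x) (q x) * (cnj (p x) - cnj (q x))" for x
  define Np where "Np = (\<integral>x. (cmod (p x))\<^sup>2 \<partial>lborel)"
  define Nq where "Nq = (\<integral>x. (cmod (q x))\<^sup>2 \<partial>lborel)"
  have "Re lam * (Np + Nq) + \<bar>Im lam\<bar> * (Np + Nq)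
      \<le> (\<integral>x. Re (\<rho> x) \<partial>lborel) + (\<integral>x. \<bar>Im (\<rho> x)\<bar> \<partial>lborel) + (c\<^sup>2 / 4 * Np + c\<^sup>2 / (4 * \<epsilon>) * Nq)"
    using H2_energy_Re[OF Hp Hq eq_p eq_q] H2_energy_abs_Im_le[OF Hp Hq eq_p eq_q \<open>0 < \<epsilon>\<close>]
    unfolding \<rho>_def Np_def Nq_def by linarith
  also have "\<dots> \<le> (2 * A + B) * (Np + Nq) + c\<^sup>2 / 4 * max 1 (1 / \<epsilon>) * (Np + Nq)"
  proof (rule add_mono)
    have "integrable lborel \<rho>"
      using H2_energy_identity(1)[OF Hp Hq eq_p eq_q] by (simp add: \<rho>_def[abs_def])
    moreover have "Re (\<rho> x) + \<bar>Im (\<rho> x)\<bar> \<le> (2 * A + B) * ((cmod (p x))\<^sup>2 + (cmod (q x))\<^sup>2)" for x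
      unfolding \<rho>_def using a b assms(7,8) by (intro Re_plus_abs_Im_coupling_mult_cnj_le)
    ultimately have "(\<integral>x. Re (\<rho> x) + \<bar>Im (\<rho> x)\<bar> \<partial>lborel)
        \<le> (\<integral>x. (2 * A + B) * ((cmod (p x))\<^sup>2 + (cmod (q x))\<^sup>2) \<partial>lborel)"
      using Hp Hq unfolding H2_def by (intro integral_mono) auto
    with \<open>integrable lborel \<rho>\<close> show "(\<integral>x. Re (\<rho> x) \<partial>lborel) + (\<integral>x. \<bar>Im (\<rho> x)\<bar> \<partial>lborel) \<le> (2 * A + B) * (Np + Nq)"
      using Hp Hq unfolding Np_def Nq_def H2_def by simp
    have "0 \<le> Np" "0 \<le> Nq"
      unfolding Np_def Nq_def by (simp_all add: Bochner_Integration.integral_nonneg)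
    then have "1 * Np + 1 / \<epsilon> * Nq \<le> max 1 (1 / \<epsilon>) * Np + max 1 (1 / \<epsilon>) * Nq"
      by (intro add_mono mult_right_mono) auto
    from mult_left_mono[OF this, of "c\<^sup>2 / 4"]
    show "c\<^sup>2 / 4 * Np + c\<^sup>2 / (4 * \<epsilon>) * Nq \<le> c\<^sup>2 / 4 * max 1 (1 / \<epsilon>) * (Np + Nq)"
      by (simp add: algebra_simps)
  qed
  finally have "(Re lam + \<bar>Im lam\<bar>) * (Np + Nq) \<le> (c\<^sup>2 / 4 * max 1 (1 / \<epsilon>) + 2 * A + B) * (Np + Nq)"
    by (simp add: algebra_simps)
  then have "Re lam + \<bar>Im lam\<bar> \<le> c\<^sup>2 / 4 * max 1 (1 / \<epsilon>) + 2 * A + B"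
    using H2_norm_sum_pos[OF Hp Hq nonzero] unfolding Np_def Nq_def by simp
  then show ?thesis
    using cmod_le[of lam] \<open>0 \<le> Re lam\<close> by simp
qed

theorem theorem4p3:
  fixes \<epsilon> h Z \<sigma> Tign \<delta> c :: real
    and u u' u'' y y' y'' :: "real \<Rightarrow> real"
    and lam :: complex
  assumes eps: "0 < \<epsilon>" "\<epsilon> < 1"
    and hh: "0 < h" "h < 1"
    and ZZ: "0 < Z"
    and sig: "0 < \<sigma>" "\<sigma> < 1"
    and Tig: "0 < Tign" "0 < \<delta>" "Tign + 2 * \<delta> < 1"
    and cpos: "0 < c"
    and du: "\<And>x. (u has_real_derivative u' x) (at x)" "\<And>x. (u' has_real_derivative u'' x) (at x)"
    and dy: "\<And>x. (y has_real_derivative y' x) (at x)" "\<And>x. (y' has_real_derivative y'' x) (at x)"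
    and equ: "\<And>x. u'' x + c * u' x
                 + y x * Frate Z h \<sigma> Tign \<delta> (h * u x + (1 - h) * (1 - y x)) = 0"
    and eqy: "\<And>x. \<epsilon> * y'' x + c * y' x
                 - y x * Frate Z h \<sigma> Tign \<delta> (h * u x + (1 - h) * (1 - y x)) = 0"
    and limbot: "(u \<longlongrightarrow> 1) at_bot" "(y \<longlongrightarrow> 0) at_bot"
    and limtop: "(u \<longlongrightarrow> 0) at_top" "(y \<longlongrightarrow> 1) at_top"
    and ybd: "\<And>x. 0 \<le> y x \<and> y x \<le> 1"
    and wbd: "\<And>x. 0 \<le> h * u x + (1 - h) * (1 - y x) \<and> h * u x + (1 - h) * (1 - y x) \<le> 1"
    and lam: "lam \<noteq> 0" "0 \<le> Re lam"
    and eig: "\<exists>p p' p'' q q' q''. H2 p p' p'' \<and> H2 q q' q'' \<and> (\<exists>x. p x \<noteq> 0 \<or> q x \<noteq> 0) \<and>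
       (\<forall>x. let w = h * u x + (1 - h) * (1 - y x);
                 a = complex_of_real (Fw Z h \<sigma> Tign \<delta> w * y x);
                 b = complex_of_real (Frate Z h \<sigma> Tign \<delta> w)
             in lam * p x = p'' x + of_real c * p' x
                             + a * (of_real h * p x - of_real (1 - h) * q x) + b * q x
              \<and> lam * q x = of_real \<epsilon> * q'' x + of_real c * q' x
                             - a * (of_real h * p x - of_real (1 - h) * q x) - b * q x)"
  shows "Re lam \<le> (3 - 3 * h / 2)
            * (SUP x. Fw Z h \<sigma> Tign \<delta> (h * u x + (1 - h) * (1 - y x)) * y x)
            + exp (Z * (1 - h))
         \<and> cmod lam \<le> c\<^sup>2 / 4 * max 1 (1 / \<epsilon>)
            + (3 - h) * (SUP x. Fw Z h \<sigma> Tign \<delta> (h * u x + (1 - h) * (1 - y x)) * y x)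
            + exp (Z * (1 - h))"
proof -
  define A where "A = (SUP x. Fw Z h \<sigma> Tign \<delta> (h * u x + (1 - h) * (1 - y x)) * y x)"
  define a where "a x = Fw Z h \<sigma> Tign \<delta> (h * u x + (1 - h) * (1 - y x)) * y x" for x
  define b where "b x = Frate Z h \<sigma> Tign \<delta> (h * u x + (1 - h) * (1 - y x))" for x
  from eig obtain p p' p'' q q' q'' x0 where Hp: "H2 p p' p''" and Hq: "H2 q q' q''"
    and nonzero: "p x0 \<noteq> 0 \<or> q x0 \<noteq> 0"
    and eq_p: "\<And>x. lam * p x = p'' x + of_real c * p' x + coupling h (a x) (b x) (p x) (q x)"
    and eq_q: "\<And>x. lam * q x = of_real \<epsilon> * q'' x + of_real c * q' x - coupling h (a x) (b x) (p x) (q x)"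
    unfolding Let_def coupling_def a_def b_def by (simp add: add.assoc diff_diff_eq; blast)
  have a: "0 \<le> a x" "a x \<le> A" for x
    unfolding a_def A_def
    using Fw_mult_bounds[where w = "\<lambda>x. h * u x + (1 - h) * (1 - y x)" and y = y and Z = Z and h = h,
        OF Tig(2) sig(1) _ _ _ wbd ybd] sig(2) ZZ hh(1) by auto
  have b: "0 \<le> b x" "b x \<le> exp (Z * (1 - h))" for x
    unfolding b_def using Frate_bounds[OF Tig(2) sig(1)] wbd[of x] sig(2) ZZ hh(1) by auto
  have "3 / 2 * A \<le> (3 - 3 * h / 2) * A" "2 * A \<le> (3 - h) * A"
    using a(1)[of 0] a(2)[of 0] hh by (intro mult_right_mono; linarith)+
  moreover have "Re lam \<le> 3 / 2 * A + exp (Z * (1 - h))"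
    using eps(1) hh a b by (intro coupled_eigenvalue_Re_le[OF Hp Hq nonzero eq_p eq_q]) auto
  moreover have "cmod lam \<le> c\<^sup>2 / 4 * max 1 (1 / \<epsilon>) + 2 * A + exp (Z * (1 - h))"
    using eps(1) hh lam(2) a b by (intro coupled_eigenvalue_cmod_le[OF Hp Hq nonzero eq_p eq_q]) auto
  ultimately show ?thesis
    unfolding A_def[symmetric] by linarith
qed

end
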